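(* Let $I$ be a real interval centered at $0$ with $[-1,1]\subseteq I$, and let $f\colon I^n\to\mathbb{R}$ be such that $f|_{I_+^n}$ or $f|_{I_-^n}$ is nonconstant. The following are equivalent: (i) $f$ is a symmetric quasi-Lovász extension and there exists $A\subseteq[n]$ with $f_0(\mathbf{1}_A)\neq 0$; (ii) $f$ is comonotonically modular and $f_0$ is oddly homogeneous; (iii) there exists a nondecreasing odd function $\varphi_f\colon I\to\mathbb{R}$ with $\varphi_f(1)=1$ such that $f=\check{L}_{f|_{\{0,1\}^n}}\circ\varphi_f$, i.e. $f(\mathbf{x})=\check{L}_{f|_{\{0,1\}^n}}(\varphi_f(x_1),\ldots,\varphi_f(x_n))$ for all $\mathbf{x}\in I^n$.
   Context: Notation: $[n]=\{1,\ldots,n\}$; $I_+=I\cap[0,\infty[$, $I_-=I\cap\,]-\infty,0]$; $\mathbf{1}_A$ is the indicator tuple of $A\subseteq[n]$, $\mathbf{0}=\mathbf{1}_\varnothing$; for a function $g$, $g_0=g-g(\mathbf{0})$; $\mathbf{x}^+$ has components $\max(x_i,0)$, $\mathbf{x}^-=(-\mathbf{x})^+$. For $\sigma$ a permutation of $[n]$, $\mathbb{R}^n_\sigma=\{\mathbf{x}: x_{\sigma(1)}\leq\cdots\leq x_{\sigma(n)}\}$, $A^\uparrow_\sigma(i)=\{\sigma(i),\ldots,\sigma(n)\}$, $A^\uparrow_\sigma(n+1)=\varnothing$. The Lovász extension $L_\psi\colon\mathbb{R}^n\to\mathbb{R}$ of $\psi\colon\{0,1\}^n\to\mathbb{R}$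 is the function whose restriction to each $\mathbb{R}^n_\sigma$ is the unique affine function agreeing with $\psi$ at the points $\mathbf{1}_{A^\uparrow_\sigma(k)}$, $k\in[n+1]$. The symmetric Lovász extension of $\psi$ is $\check{L}_\psi(\mathbf{x})=\psi(\mathbf{0})+L_\psi(\mathbf{x}^+)-L_\psi(\mathbf{x}^-)$; a symmetric Lovász extension is any $\check{L}_\psi$. A symmetric quasi-Lovász extension is $f(\mathbf{x})=\check{L}(\varphi(x_1),\ldots,\varphi(x_n))$ with $\check{L}$ a symmetric Lovász extension and $\varphi\colon I\to\mathbb{R}$ nondecreasing and odd. Comonotonic: $\mathbf{x},\mathbf{x}'\in I^n\cap\mathbb{R}^n_\sigma$ for some $\sigma$. Comonotonically modular: $f(\mathbf{x})+f(\mathbf{x}')=f(\mathbf{x}\wedge\mathbf{x}')+f(\mathbf{x}\vee\mathbf{x}')$ for all comonotonic $\mathbf{x},\mathbf{x}'$ ($\wedge,\vee$ componentwise). A function $g\colon I^n\to\mathbb{R}$ is oddly homogeneous if there exists a nondecreasing odd $\phi\colon I\to\mathbb{R}$ with $g(x\mathbf{1}_A)=\phi(x)g(\mathbf{1}_A)$ for all $x\in I$, $A\subseteq[n]$. *)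

theory Defs
  imports "HOL-Analysis.Analysis"
begin

(* Vectors in R^n are functions 'n => real for a finite index type 'n; [n] = UNIV,
   n = CARD('n). A permutation sigma of [n] is a bijection {1..n} -> UNIV. *)

definition perm_idx :: "(nat \<Rightarrow> 'n::finite) \<Rightarrow> bool" where
  "perm_idx \<sigma> \<longleftrightarrow> bij_betw \<sigma> {1..CARD('n)} UNIV"

definition cone :: "(nat \<Rightarrow> 'n::finite) \<Rightarrow> ('n \<Rightarrow> real) set" where
  "cone \<sigma> = {x. \<forall>i j. 1 \<le> i \<longrightarrow> i \<le> j \<longrightarrow> j \<le> CARD('n) \<longrightarrow> x (\<sigma> i) \<le> x (\<sigma> j)}"

(* A^uparrow_sigma(i) = {sigma(i),...,sigma(n)}; for i = n+1 this is empty *)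
definition Aup :: "(nat \<Rightarrow> 'n::finite) \<Rightarrow> nat \<Rightarrow> 'n set" where
  "Aup \<sigma> i = \<sigma> ` {i..CARD('n)}"

definition ind :: "'n set \<Rightarrow> 'n \<Rightarrow> real" where
  "ind A = (\<lambda>j. if j \<in> A then 1 else 0)"

definition affine_fun :: "(('n::finite \<Rightarrow> real) \<Rightarrow> real) \<Rightarrow> bool" where
  "affine_fun g \<longleftrightarrow> (\<exists>c a. \<forall>x. g x = c + (\<Sum>j\<in>UNIV. a j * x j))"

(* L is a Lovasz extension of psi (psi only matters on {0,1}^n) *)
definition is_lovasz_ext :: "(('n::finite \<Rightarrow> real) \<Rightarrow> real) \<Rightarrow> (('n \<Rightarrow> real) \<Rightarrow> real) \<Rightarrow> bool" where
  "is_lovasz_ext \<psi> L \<longleftrightarrow>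
     (\<forall>\<sigma>. perm_idx \<sigma> \<longrightarrow>
        (\<exists>g. affine_fun g \<and>
             (\<forall>k\<in>{1..CARD('n)+1}. g (ind (Aup \<sigma> k)) = \<psi> (ind (Aup \<sigma> k))) \<and>
             (\<forall>x\<in>cone \<sigma>. L x = g x)))"

definition lovasz :: "(('n::finite \<Rightarrow> real) \<Rightarrow> real) \<Rightarrow> ('n \<Rightarrow> real) \<Rightarrow> real" where
  "lovasz \<psi> = (THE L. is_lovasz_ext \<psi> L)"

definition pos_part :: "('n \<Rightarrow> real) \<Rightarrow> 'n \<Rightarrow> real" where
  "pos_part x = (\<lambda>j. max (x j) 0)"

definition neg_part :: "('n \<Rightarrow> real) \<Rightarrow> 'n \<Rightarrow> real" where
  "neg_part x = pos_part (\<lambda>j. - x j)"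

definition sym_lovasz :: "(('n::finite \<Rightarrow> real) \<Rightarrow> real) \<Rightarrow> ('n \<Rightarrow> real) \<Rightarrow> real" where
  "sym_lovasz \<psi> x = \<psi> (ind {}) + lovasz \<psi> (pos_part x) - lovasz \<psi> (neg_part x)"

definition odd_on :: "real set \<Rightarrow> (real \<Rightarrow> real) \<Rightarrow> bool" where
  "odd_on I \<phi> \<longleftrightarrow> (\<forall>x\<in>I. \<phi> (- x) = - \<phi> x)"

definition cube :: "real set \<Rightarrow> ('n \<Rightarrow> real) set" where
  "cube I = {x. \<forall>j. x j \<in> I}"

definition sym_quasi_lovasz :: "real set \<Rightarrow> (('n::finite \<Rightarrow> real) \<Rightarrow> real) \<Rightarrow> bool" where
  "sym_quasi_lovasz I f \<longleftrightarrow>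
     (\<exists>\<psi> \<phi>. mono_on I \<phi> \<and> odd_on I \<phi> \<and>
        (\<forall>x\<in>cube I. f x = sym_lovasz \<psi> (\<phi> \<circ> x)))"

definition comonotonic_modular :: "real set \<Rightarrow> (('n::finite \<Rightarrow> real) \<Rightarrow> real) \<Rightarrow> bool" where
  "comonotonic_modular I f \<longleftrightarrow>
     (\<forall>\<sigma> x x'. perm_idx \<sigma> \<longrightarrow> x \<in> cube I \<inter> cone \<sigma> \<longrightarrow> x' \<in> cube I \<inter> cone \<sigma> \<longrightarrow>
        f x + f x' = f (\<lambda>j. min (x j) (x' j)) + f (\<lambda>j. max (x j) (x' j)))"

definition oddly_homogeneous :: "real set \<Rightarrow> (('n::finite \<Rightarrow> real) \<Rightarrow> real) \<Rightarrow> bool" where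
  "oddly_homogeneous I g \<longleftrightarrow>
     (\<exists>\<phi>. mono_on I \<phi> \<and> odd_on I \<phi> \<and>
        (\<forall>x\<in>I. \<forall>A. g (\<lambda>j. x * ind A j) = \<phi> x * g (ind A)))"

definition f0 :: "(('n \<Rightarrow> real) \<Rightarrow> real) \<Rightarrow> ('n \<Rightarrow> real) \<Rightarrow> real" where
  "f0 f = (\<lambda>x. f x - f (ind {}))"

definition nonconst_on :: "('a \<Rightarrow> real) \<Rightarrow> 'a set \<Rightarrow> bool" where
  "nonconst_on f S \<longleftrightarrow> (\<exists>x\<in>S. \<exists>y\<in>S. f x \<noteq> f y)"

end

theory Submission
  imports Defs
begin

(* 1. The Lovasz extension is computed explicitly: with the Moebius transform m of psi,
      L_psi(x) = psi(0) + sum over nonempty S of m(S) * min_{j in S} x_j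
      is affine on every cone R^n_sigma and interpolates psi on the chain 1_{A(k)}; since an
      affine function vanishing on such a chain vanishes identically, it is THE Lovasz extension.
   2. From this formula: L_psi is modular on comonotonic pairs (min over S is attained at a
      common index), hence so is the symmetric extension and every composite of it with a
      nondecreasing phi; and on rays, sym_lovasz psi (t 1_A) = psi(0) + t (psi(1_A) - psi(0)).
   3. Uniqueness principle: two comonotonically modular functions on I^n that agree on all
      rays t 1_A agree everywhere.  For x >= 0 one peels off the top level set of x by one
      modular identity and inducts on the number of distinct values; x <= 0 follows by the
      reflection x -> -x, and a general x is split into its positive and negative parts.
   4. The three implications (i) => (ii), (ii) => (iii) (using the uniqueness principle)
      and (iii) => (ii) give the theorem. *)

section \<open>The Lovasz extension via the Moebius transform\<close>

definition mobius :: "(('n::finite \<Rightarrow> real) \<Rightarrow> real) \<Rightarrow> 'n set \<Rightarrow> real" where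
  "mobius \<psi> S = (-1)^card S * (\<Sum>T\<in>Pow S. (-1)^card T * \<psi> (ind T))"

(* The candidate Lovasz extension, written without reference to any permutation. *)
definition lovasz_mobius :: "(('n::finite \<Rightarrow> real) \<Rightarrow> real) \<Rightarrow> ('n \<Rightarrow> real) \<Rightarrow> real" where
  "lovasz_mobius \<psi> x = \<psi> (ind {}) + (\<Sum>S\<in>{S. S \<noteq> {}}. mobius \<psi> S * Min (x ` S))"

lemma mobius_inversion: "(\<Sum>T\<in>Pow A. mobius \<psi> T) = \<psi> (ind (A::'n::finite set))"
proof -
  have "\<psi> (ind A) = (\<Sum>T\<in>Pow A. (-1)^card T * (\<Sum>U\<in>Pow T. (-1)^card U * \<psi> (ind U)))"
    by (rule inclusion_exclusion_symmetric[where f="\<lambda>T. \<psi> (ind T)"]) auto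
  then show ?thesis by (simp add: mobius_def)
qed

lemma Min_ind:
  assumes "S \<noteq> {}"
  shows "Min (ind A ` (S::'n::finite set)) = (if S \<subseteq> A then 1 else 0)"
proof (cases "S \<subseteq> A")
  case True
  then have "ind A ` S = {1}" using assms by (auto simp: ind_def)
  then show ?thesis using True by simp
next
  case False
  then obtain j where "j \<in> S" "j \<notin> A" by auto
  then have "Min (ind A ` S) = 0" by (intro Min_eqI) (auto simp: ind_def)
  then show ?thesis using False by simp
qed

lemma lovasz_mobius_ind: "lovasz_mobius \<psi> (ind (A::'n::finite set)) = \<psi> (ind A)"
proof -
  have "(\<Sum>S\<in>{S. S \<noteq> {}}. mobius \<psi> S * Min (ind A ` S))
      = (\<Sum>S\<in>{S. S \<noteq> {}}. if S \<subseteq> A then mobius \<psi> S else 0)"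
    by (rule sum.cong) (auto simp: Min_ind)
  also have "\<dots> = (\<Sum>S\<in>Pow A - {{}}. mobius \<psi> S)"
    by (simp add: sum.If_cases Int_def conj_commute Diff_eq)
  also have "\<dots> = \<psi> (ind A) - \<psi> (ind {})"
    by (simp add: sum_diff1 mobius_inversion) (simp add: mobius_def)
  finally show ?thesis by (simp add: lovasz_mobius_def)
qed

lemma lovasz_mobius_ray:
  assumes "0 \<le> r"
  shows "lovasz_mobius \<psi> (\<lambda>j. r * ind (A::'n::finite set) j)
         = \<psi> (ind {}) + r * (\<psi> (ind A) - \<psi> (ind {}))"
proof -
  have Min_scale: "Min ((\<lambda>j. r * ind A j) ` S) = r * Min (ind A ` S)" if "S \<noteq> {}" for S
  proof -
    have "mono (\<lambda>y::real. r * y)" using assms by (auto intro: monoI mult_left_mono)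
    then have "r * Min (ind A ` S) = Min ((\<lambda>y. r * y) ` ind A ` S)"
      by (rule mono_Min_commute) (use that in auto)
    then show ?thesis by (simp add: image_image)
  qed
  have "(\<Sum>S\<in>{S. S \<noteq> {}}. mobius \<psi> S * Min ((\<lambda>j. r * ind A j) ` S))
      = r * (\<Sum>S\<in>{S. S \<noteq> {}}. mobius \<psi> S * Min (ind A ` S))"
    by (simp add: sum_distrib_left Min_scale mult_ac)
  also have "\<dots> = r * (\<psi> (ind A) - \<psi> (ind {}))"
    using lovasz_mobius_ind[of \<psi> A] by (simp add: lovasz_mobius_def)
  finally show ?thesis by (simp add: lovasz_mobius_def)
qed

section \<open>Permutations, cones and uniqueness of the Lovasz extension\<close>

(* Every vector lies in some cone R^n_sigma: sort the coordinates. *)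
lemma sort_perm: "\<exists>\<sigma>. perm_idx \<sigma> \<and> (x::'n::finite \<Rightarrow> real) \<in> cone \<sigma>"
proof -
  obtain xs :: "'n list" where xs: "set xs = UNIV" "distinct xs"
    using finite_distinct_list[of "UNIV::'n set"] by auto
  define ys where "ys = sort_key x xs"
  have ys: "set ys = UNIV" "distinct ys" "sorted (map x ys)" using xs by (auto simp: ys_def)
  have len: "length ys = CARD('n)" using distinct_card[OF ys(2)] ys(1) by simp
  define \<sigma> where "\<sigma> = (\<lambda>k. ys ! (k - 1))"
  have "bij_betw \<sigma> {1..CARD('n)} UNIV"
  proof (rule bij_betw_imageI)
    show "inj_on \<sigma> {1..CARD('n)}"
    proof (rule inj_onI)
      fix k l assume kl: "k \<in> {1..CARD('n)}" "l \<in> {1..CARD('n)}" "\<sigma> k = \<sigma> l"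
      then have "k - 1 = l - 1" using nth_eq_iff_index_eq[OF ys(2)] len by (auto simp: \<sigma>_def)
      then show "k = l" using kl by auto
    qed
    have "j \<in> \<sigma> ` {1..CARD('n)}" for j
    proof -
      obtain i where "i < length ys" "ys ! i = j" using ys(1) by (metis UNIV_I in_set_conv_nth)
      then show ?thesis using len by (auto simp: \<sigma>_def image_iff intro!: bexI[of _ "Suc i"])
    qed
    then show "\<sigma> ` {1..CARD('n)} = UNIV" by auto
  qed
  moreover have "x \<in> cone \<sigma>"
    unfolding cone_def \<sigma>_def
  proof (intro CollectI allI impI)
    fix i j :: nat assume ij: "1 \<le> i" "i \<le> j" "j \<le> CARD('n)"
    then have "map x ys ! (i - 1) \<le> map x ys ! (j - 1)"
      by (intro sorted_nth_mono[OF ys(3)]) (auto simp: len)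
    then show "x (ys ! (i - 1)) \<le> x (ys ! (j - 1))" using ij len by simp
  qed
  ultimately show ?thesis by (auto simp: perm_idx_def)
qed

lemma perm_surj:
  assumes "perm_idx (\<sigma>::nat \<Rightarrow> 'n::finite)"
  obtains k where "k \<in> {1..CARD('n)}" "\<sigma> k = j"
  using assms by (metis UNIV_I bij_betw_def imageE perm_idx_def)

lemma perm_inj:
  assumes "perm_idx (\<sigma>::nat \<Rightarrow> 'n::finite)" "i \<in> {1..CARD('n)}" "l \<in> {1..CARD('n)}" "\<sigma> i = \<sigma> l"
  shows "i = l"
  using assms by (auto simp: perm_idx_def bij_betw_def dest: inj_onD)

lemma Aup_mem:
  assumes "perm_idx (\<sigma>::nat \<Rightarrow> 'n::finite)" "i \<in> {1..CARD('n)}" "1 \<le> k"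
  shows "\<sigma> i \<in> Aup \<sigma> k \<longleftrightarrow> k \<le> i"
proof
  assume "\<sigma> i \<in> Aup \<sigma> k"
  then obtain l where l: "l \<in> {k..CARD('n)}" "\<sigma> i = \<sigma> l" by (auto simp: Aup_def)
  then have "i = l" using perm_inj[OF assms(1,2), of l] assms(3) by auto
  then show "k \<le> i" using l by auto
qed (use assms in \<open>auto simp: Aup_def\<close>)

lemma chain_in_cone:
  assumes "perm_idx (\<sigma>::nat \<Rightarrow> 'n::finite)" "1 \<le> k"
  shows "ind (Aup \<sigma> k) \<in> cone \<sigma>"
  unfolding cone_def
proof (intro CollectI allI impI)
  fix i j :: nat assume "1 \<le> i" "i \<le> j" "j \<le> CARD('n)"
  then show "ind (Aup \<sigma> k) (\<sigma> i) \<le> ind (Aup \<sigma> k) (\<sigma> j)"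
    using Aup_mem[OF assms(1), of i k] Aup_mem[OF assms(1), of j k] assms(2)
    by (auto simp: ind_def)
qed

lemma affine_diff: "affine_fun g \<Longrightarrow> affine_fun h \<Longrightarrow> affine_fun (\<lambda>x. g x - h x)"
  unfolding affine_fun_def
proof (elim exE)
  fix c a d b
  assume "\<forall>x. g x = c + (\<Sum>j\<in>UNIV. a j * x j)" "\<forall>x. h x = d + (\<Sum>j\<in>UNIV. b j * x j)"
  then show "\<exists>c a. \<forall>x. g x - h x = c + (\<Sum>j\<in>UNIV. a j * x j)"
    by (intro exI[of _ "c - d"] exI[of _ "\<lambda>j. a j - b j"]) (simp add: algebra_simps sum_subtractf)
qed

(* An affine function vanishing on the chain of sigma vanishes identically: consecutive
   chain vectors differ in exactly one coordinate, which pins down every coefficient. *)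
lemma affine_zero_on_chain:
  assumes "affine_fun h" "perm_idx (\<sigma>::nat \<Rightarrow> 'n::finite)"
    and chain: "\<forall>k\<in>{1..CARD('n)+1}. h (ind (Aup \<sigma> k)) = 0"
  shows "h x = 0"
proof -
  obtain c a where h: "\<And>x. h x = c + (\<Sum>j\<in>UNIV. a j * x j)"
    using assms(1) unfolding affine_fun_def by auto
  have "Aup \<sigma> (CARD('n)+1) = {}" by (simp add: Aup_def)
  then have "h (ind {}) = 0" using chain by (metis atLeastAtMost_iff le_add2 order_refl)
  then have c: "c = 0" by (simp add: h ind_def)
  have a: "a j = 0" for j
  proof -
    obtain k where k: "k \<in> {1..CARD('n)}" "\<sigma> k = j" using perm_surj[OF assms(2)] by blast
    have step: "ind (Aup \<sigma> k) i = ind (Aup \<sigma> (k+1)) i + (if i = j then 1 else 0)" for i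
    proof -
      obtain m where m: "m \<in> {1..CARD('n)}" "\<sigma> m = i" using perm_surj[OF assms(2)] by blast
      have "\<sigma> m = \<sigma> k \<longleftrightarrow> m = k" using perm_inj[OF assms(2) m(1) k(1)] by auto
      then show ?thesis using Aup_mem[OF assms(2) m(1), of k] Aup_mem[OF assms(2) m(1), of "k+1"] k m
        by (auto simp: ind_def)
    qed
    have "h (ind (Aup \<sigma> k)) = h (ind (Aup \<sigma> (k+1))) + a j"
      by (simp add: h step distrib_left sum.distrib if_distrib[of "(*) _"] sum.delta)
    then show ?thesis using chain k by auto
  qed
  show ?thesis by (simp add: h c a)
qed

(* The sigma-first element of S: on the cone of sigma, min over S is attained there. *)
definition first_in :: "(nat \<Rightarrow> 'n::finite) \<Rightarrow> 'n set \<Rightarrow> 'n" where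
  "first_in \<sigma> S = \<sigma> (Min {k \<in> {1..CARD('n)}. \<sigma> k \<in> S})"

lemma first_in_min:
  assumes "perm_idx (\<sigma>::nat \<Rightarrow> 'n::finite)" "S \<noteq> {}" "x \<in> cone \<sigma>"
  shows "Min (x ` S) = x (first_in \<sigma> S)"
proof -
  define K where "K = {k \<in> {1..CARD('n)}. \<sigma> k \<in> S}"
  have K_all: "\<exists>l\<in>K. \<sigma> l = i" if "i \<in> S" for i
    using perm_surj[OF assms(1)] that unfolding K_def by (metis (mono_tags) mem_Collect_eq)
  then have "K \<noteq> {}" using assms(2) by blast
  then have MK: "Min K \<in> K" by (intro Min_in) (auto simp: K_def)
  show ?thesis
  proof (rule Min_eqI)
    show "x (first_in \<sigma> S) \<in> x ` S" using MK by (auto simp: first_in_def K_def)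
    fix y assume "y \<in> x ` S"
    then obtain l where "l \<in> K" "y = x (\<sigma> l)" using K_all by blast
    moreover have "Min K \<le> l" using \<open>l \<in> K\<close> by (simp add: K_def)
    ultimately show "x (first_in \<sigma> S) \<le> y"
      using MK assms(3) unfolding cone_def first_in_def K_def[symmetric] by (auto simp: K_def)
  qed simp
qed

lemma lovasz_mobius_affine_on_cone:
  fixes \<psi> :: "('n::finite \<Rightarrow> real) \<Rightarrow> real"
  assumes "perm_idx (\<sigma>::nat \<Rightarrow> 'n)"
  defines "g \<equiv> \<lambda>x. \<psi> (ind {}) + (\<Sum>S\<in>{S. S \<noteq> {}}. mobius \<psi> S * x (first_in \<sigma> S))"
  shows "affine_fun g" and "x \<in> cone \<sigma> \<Longrightarrow> lovasz_mobius \<psi> x = g x"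
proof -
  show "affine_fun g"
    unfolding affine_fun_def
  proof (intro exI allI)
    fix x :: "'n \<Rightarrow> real"
    let ?P = "{S::'n set. S \<noteq> {}}"
    have "(\<Sum>j\<in>UNIV. (\<Sum>S\<in>{S \<in> ?P. first_in \<sigma> S = j}. mobius \<psi> S) * x j)
        = (\<Sum>j\<in>UNIV. \<Sum>S\<in>{S \<in> ?P. first_in \<sigma> S = j}. mobius \<psi> S * x (first_in \<sigma> S))"
      by (rule sum.cong) (auto simp: sum_distrib_right)
    also have "\<dots> = (\<Sum>S\<in>?P. mobius \<psi> S * x (first_in \<sigma> S))"
      by (rule sum.group) auto
    finally show "g x = \<psi> (ind {}) + (\<Sum>j\<in>UNIV. (\<Sum>S\<in>{S \<in> ?P. first_in \<sigma> S = j}. mobius \<psi> S) * x j)"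
      by (simp add: g_def)
  qed
  show "lovasz_mobius \<psi> x = g x" if "x \<in> cone \<sigma>"
    using first_in_min[OF assms(1) _ that] by (simp add: lovasz_mobius_def g_def)
qed

lemma lovasz_mobius_is_ext: "is_lovasz_ext \<psi> (lovasz_mobius \<psi>)"
  unfolding is_lovasz_ext_def
proof (intro allI impI)
  fix \<sigma> :: "nat \<Rightarrow> 'a" assume \<sigma>: "perm_idx \<sigma>"
  note g = lovasz_mobius_affine_on_cone[OF \<sigma>, where \<psi>=\<psi>]
  show "\<exists>g. affine_fun g \<and> (\<forall>k\<in>{1..CARD('a)+1}. g (ind (Aup \<sigma> k)) = \<psi> (ind (Aup \<sigma> k))) \<and>
            (\<forall>x\<in>cone \<sigma>. lovasz_mobius \<psi> x = g x)"
    using g chain_in_cone[OF \<sigma>] lovasz_mobius_ind[of \<psi>] by (intro exI conjI ballI) (auto, metis)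
qed

lemma lovasz_eq: "lovasz \<psi> = lovasz_mobius (\<psi> :: ('n::finite \<Rightarrow> real) \<Rightarrow> real)"
  unfolding lovasz_def
proof (rule the_equality)
  show "is_lovasz_ext \<psi> (lovasz_mobius \<psi>)" by (rule lovasz_mobius_is_ext)
  fix L assume L: "is_lovasz_ext \<psi> L"
  show "L = lovasz_mobius \<psi>"
  proof
    fix x :: "'n \<Rightarrow> real"
    obtain \<sigma> where \<sigma>: "perm_idx \<sigma>" "x \<in> cone \<sigma>" using sort_perm by blast
    obtain g where g: "affine_fun g" "\<forall>k\<in>{1..CARD('n)+1}. g (ind (Aup \<sigma> k)) = \<psi> (ind (Aup \<sigma> k))"
      "\<forall>x\<in>cone \<sigma>. L x = g x" using L \<sigma>(1) unfolding is_lovasz_ext_def by blast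
    obtain g' where g': "affine_fun g'" "\<forall>k\<in>{1..CARD('n)+1}. g' (ind (Aup \<sigma> k)) = \<psi> (ind (Aup \<sigma> k))"
      "\<forall>x\<in>cone \<sigma>. lovasz_mobius \<psi> x = g' x"
      using lovasz_mobius_is_ext[of \<psi>] \<sigma>(1) unfolding is_lovasz_ext_def by blast
    have "g x - g' x = 0"
      using affine_zero_on_chain[OF affine_diff[OF g(1) g'(1)] \<sigma>(1)] g(2) g'(2) by auto
    then show "L x = lovasz_mobius \<psi> x" using g(3) g'(3) \<sigma>(2) by auto
  qed
qed

section \<open>Comonotonicity and modularity\<close>

(* Permutation-free description of comonotonic pairs. *)
definition comon :: "('n \<Rightarrow> real) \<Rightarrow> ('n \<Rightarrow> real) \<Rightarrow> bool" where
  "comon x y \<longleftrightarrow> (\<forall>i j. 0 \<le> (x i - x j) * (y i - y j))"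

lemma comon_sym: "comon x y \<Longrightarrow> comon y x"
  unfolding comon_def by (simp add: mult.commute)

lemma comon_le:
  assumes "comon x y" "x i < x j"
  shows "y i \<le> y j"
proof (rule ccontr)
  assume "\<not> y i \<le> y j"
  then have "(x i - x j) * (y i - y j) < 0" using assms(2) by (intro mult_neg_pos) auto
  then show False using assms(1) unfolding comon_def by (meson not_le)
qed

lemma comon_uminus: "comon x y \<Longrightarrow> comon (\<lambda>j. - x j) (\<lambda>j. - y j)"
  unfolding comon_def by (simp add: algebra_simps)

lemma comon_mono:
  assumes "comon x y" "\<forall>j. x j \<in> D" "\<forall>j. y j \<in> D" "mono_on D h"
  shows "comon (\<lambda>j. h (x j)) (\<lambda>j. h (y j))"
  unfolding comon_def
proof (intro allI)
  fix i j
  have mono: "x a < x b \<Longrightarrow> h (x a) \<le> h (x b) \<and> h (y a) \<le> h (y b)" for a b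
    using comon_le[OF assms(1)] assms(2-4) by (auto intro: mono_onD)
  consider "x i < x j" | "x i = x j" | "x j < x i" by linarith
  then show "0 \<le> (h (x i) - h (x j)) * (h (y i) - h (y j))"
    by cases (use mono[of i j] mono[of j i] in \<open>auto intro: mult_nonpos_nonpos mult_nonneg_nonneg\<close>)
qed

lemma comon_pos: "comon x y \<Longrightarrow> comon (pos_part x) (pos_part y)"
  unfolding pos_part_def by (rule comon_mono[where D=UNIV]) (auto intro: mono_onI)

lemma comon_neg: "comon x y \<Longrightarrow> comon (neg_part x) (neg_part y)"
  unfolding neg_part_def by (intro comon_pos comon_uminus)

lemma cone_comon:
  assumes "perm_idx (\<sigma>::nat \<Rightarrow> 'n::finite)" "x \<in> cone \<sigma>" "y \<in> cone \<sigma>"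
  shows "comon x y"
  unfolding comon_def
proof (intro allI)
  fix i j :: 'n
  obtain p where p: "p \<in> {1..CARD('n)}" "\<sigma> p = i" using perm_surj[OF assms(1)] by blast
  obtain q where q: "q \<in> {1..CARD('n)}" "\<sigma> q = j" using perm_surj[OF assms(1)] by blast
  show "0 \<le> (x i - x j) * (y i - y j)"
  proof (cases "p \<le> q")
    case True
    then have "x i \<le> x j" "y i \<le> y j" using assms(2,3) p q unfolding cone_def by auto
    then show ?thesis by (intro mult_nonpos_nonpos) auto
  next
    case False
    then have "x j \<le> x i" "y j \<le> y i" using assms(2,3) p q unfolding cone_def by auto
    then show ?thesis by (intro mult_nonneg_nonneg) auto
  qed
qed

(* Conversely, a comonotonic pair lies in a common cone: the one sorting x + y. *)
lemma comon_common_cone: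
  assumes "comon x (y::'n::finite \<Rightarrow> real)"
  obtains \<sigma> where "perm_idx \<sigma>" "x \<in> cone \<sigma>" "y \<in> cone \<sigma>"
proof -
  obtain \<sigma> where \<sigma>: "perm_idx \<sigma>" "(\<lambda>j. x j + y j) \<in> cone \<sigma>" using sort_perm by blast
  have in_cone: "z \<in> cone \<sigma>" if zw: "comon z w" "\<forall>j. z j + w j = x j + y j" for z w
    unfolding cone_def
  proof (intro CollectI allI impI)
    fix i k :: nat assume "1 \<le> i" "i \<le> k" "k \<le> CARD('n)"
    then have sum_le: "z (\<sigma> i) + w (\<sigma> i) \<le> z (\<sigma> k) + w (\<sigma> k)"
      using \<sigma>(2) zw(2) unfolding cone_def by simp
    show "z (\<sigma> i) \<le> z (\<sigma> k)"
    proof (rule ccontr)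
      assume "\<not> z (\<sigma> i) \<le> z (\<sigma> k)"
      then have "w (\<sigma> k) \<le> w (\<sigma> i)" using comon_le[OF zw(1), of "\<sigma> k" "\<sigma> i"] by simp
      then show False using sum_le \<open>\<not> z (\<sigma> i) \<le> z (\<sigma> k)\<close> by linarith
    qed
  qed
  have "x \<in> cone \<sigma>" "y \<in> cone \<sigma>"
    using in_cone[OF assms] in_cone[OF comon_sym[OF assms]] by (auto simp: add.commute)
  with \<sigma>(1) show ?thesis using that by blast
qed

lemma comonotonic_modular_iff:
  fixes f :: "('n::finite \<Rightarrow> real) \<Rightarrow> real"
  shows "comonotonic_modular I f \<longleftrightarrow>
     (\<forall>x\<in>cube I. \<forall>y\<in>cube I. comon x y \<longrightarrow>
        f x + f y = f (\<lambda>j. min (x j) (y j)) + f (\<lambda>j. max (x j) (y j)))"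
  unfolding comonotonic_modular_def
proof (intro iffI ballI impI allI)
  fix x y :: "'n \<Rightarrow> real" assume "\<forall>\<sigma> x x'. perm_idx \<sigma> \<longrightarrow> x \<in> cube I \<inter> cone \<sigma> \<longrightarrow> x' \<in> cube I \<inter> cone \<sigma> \<longrightarrow>
        f x + f x' = f (\<lambda>j. min (x j) (x' j)) + f (\<lambda>j. max (x j) (x' j))"
    and "x \<in> cube I" "y \<in> cube I" "comon x y"
  then show "f x + f y = f (\<lambda>j. min (x j) (y j)) + f (\<lambda>j. max (x j) (y j))"
    by (elim comon_common_cone) blast
next
  fix \<sigma> :: "nat \<Rightarrow> 'n" and x x' :: "'n \<Rightarrow> real" assume "\<forall>x\<in>cube I. \<forall>y\<in>cube I. comon x y \<longrightarrow>
        f x + f y = f (\<lambda>j. min (x j) (y j)) + f (\<lambda>j. max (x j) (y j))"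
    and "perm_idx \<sigma>" "x \<in> cube I \<inter> cone \<sigma>" "x' \<in> cube I \<inter> cone \<sigma>"
  then show "f x + f x' = f (\<lambda>j. min (x j) (x' j)) + f (\<lambda>j. max (x j) (x' j))"
    using cone_comon by blast
qed

(* On a comonotonic pair, every min over S is attained at a common index. *)
lemma Min_modular:
  assumes "comon x y" "S \<noteq> {}" "finite S"
  shows "Min (x ` S) + Min (y ` S)
         = Min ((\<lambda>j. min (x j) (y j)) ` S) + Min ((\<lambda>j. max (x j) (y j)) ` S)"
proof -
  have "Min ((\<lambda>i. x i + y i) ` S) \<in> (\<lambda>i. x i + y i) ` S" using assms(2,3) by (intro Min_in) auto
  then obtain j where j: "j \<in> S" "x j + y j = Min ((\<lambda>i. x i + y i) ` S)" by auto
  have le: "x j \<le> x i \<and> y j \<le> y i" if "i \<in> S" for i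
  proof -
    have "x j + y j \<le> x i + y i" using j that assms(3) by simp
    then show ?thesis
      using comon_le[OF assms(1), of i j] comon_le[OF comon_sym[OF assms(1)], of i j] by linarith
  qed
  have "Min (x ` S) = x j" "Min (y ` S) = y j"
    "Min ((\<lambda>j. min (x j) (y j)) ` S) = min (x j) (y j)"
    "Min ((\<lambda>j. max (x j) (y j)) ` S) = max (x j) (y j)"
    by (rule Min_eqI; use le j assms(3) in \<open>force simp: le_max_iff_disj intro: min.mono\<close>)+
  then show ?thesis by (simp add: min_def max_def)
qed

lemma lovasz_modular:
  assumes "comon x y"
  shows "lovasz \<psi> x + lovasz \<psi> y
         = lovasz \<psi> (\<lambda>j. min (x j) (y j)) + lovasz \<psi> (\<lambda>j. max (x j) ((y::'n::finite \<Rightarrow> real) j))"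
proof -
  let ?m = "\<lambda>z. \<Sum>S\<in>{S. S \<noteq> {}}. mobius \<psi> S * Min (z ` S)"
  have "?m x + ?m y = (\<Sum>S\<in>{S. S \<noteq> {}}. mobius \<psi> S * (Min (x ` S) + Min (y ` S)))"
    by (simp add: sum.distrib distrib_left)
  also have "\<dots> = ?m (\<lambda>j. min (x j) (y j)) + ?m (\<lambda>j. max (x j) (y j))"
    by (simp add: Min_modular[OF assms] sum.distrib distrib_left)
  finally show ?thesis by (simp add: lovasz_eq lovasz_mobius_def)
qed

(* Positive and negative parts turn min and max into min/max of the parts, so modularity of
   the Lovasz extension transfers to the symmetric extension. *)
lemma sym_lovasz_modular:
  assumes "comon x y"
  shows "sym_lovasz \<psi> x + sym_lovasz \<psi> y
         = sym_lovasz \<psi> (\<lambda>j. min (x j) (y j)) + sym_lovasz \<psi> (\<lambda>j. max (x j) ((y::'n::finite \<Rightarrow> real) j))"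
proof -
  have "pos_part (\<lambda>j. min (x j) (y j)) = (\<lambda>j. min (pos_part x j) (pos_part y j))"
    "pos_part (\<lambda>j. max (x j) (y j)) = (\<lambda>j. max (pos_part x j) (pos_part y j))"
    "neg_part (\<lambda>j. min (x j) (y j)) = (\<lambda>j. max (neg_part x j) (neg_part y j))"
    "neg_part (\<lambda>j. max (x j) (y j)) = (\<lambda>j. min (neg_part x j) (neg_part y j))"
    by (auto simp: neg_part_def pos_part_def min_def max_def)
  then show ?thesis
    using lovasz_modular[OF comon_pos[OF assms], of \<psi>] lovasz_modular[OF comon_neg[OF assms], of \<psi>]
    by (simp add: sym_lovasz_def)
qed

lemma sym_lovasz_ray:
  "sym_lovasz \<psi> (\<lambda>j. s * ind (A::'n::finite set) j) = \<psi> (ind {}) + s * (\<psi> (ind A) - \<psi> (ind {}))"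
proof -
  have parts: "pos_part (\<lambda>j. s * ind A j) = (\<lambda>j. max s 0 * ind A j)"
    "neg_part (\<lambda>j. s * ind A j) = (\<lambda>j. max (- s) 0 * ind A j)"
    by (auto simp: neg_part_def pos_part_def ind_def)
  have "max s 0 - max (- s) 0 = s" by (simp add: max_def)
  then show ?thesis
    unfolding sym_lovasz_def lovasz_eq parts lovasz_mobius_ray[OF max.cobounded2]
    by (simp add: algebra_simps)
qed

lemma odd_zero: "odd_on I \<phi> \<Longrightarrow> 0 \<in> I \<Longrightarrow> \<phi> 0 = (0::real)"
  unfolding odd_on_def by (metis add.inverse_neutral neg_equal_zero)

lemma comp_ray: "\<phi> 0 = 0 \<Longrightarrow> \<phi> \<circ> (\<lambda>j. t * ind A j) = (\<lambda>j. \<phi> t * ind A j)"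
  by (auto simp: ind_def)

lemma sym_lovasz_comp_modular:
  assumes "mono_on I \<phi>"
  shows "comonotonic_modular I (\<lambda>x. sym_lovasz \<psi> (\<phi> \<circ> (x::'n::finite \<Rightarrow> real)))"
  unfolding comonotonic_modular_iff
proof (intro ballI impI)
  fix x y :: "'n \<Rightarrow> real" assume xy: "x \<in> cube I" "y \<in> cube I" "comon x y"
  have "\<phi> (min a b) = min (\<phi> a) (\<phi> b) \<and> \<phi> (max a b) = max (\<phi> a) (\<phi> b)"
    if "a \<in> I" "b \<in> I" for a b
    using that assms by (cases "a \<le> b") (auto simp: min_def max_def dest: mono_onD)
  then have "\<phi> \<circ> (\<lambda>j. min (x j) (y j)) = (\<lambda>j. min ((\<phi> \<circ> x) j) ((\<phi> \<circ> y) j))"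
    "\<phi> \<circ> (\<lambda>j. max (x j) (y j)) = (\<lambda>j. max ((\<phi> \<circ> x) j) ((\<phi> \<circ> y) j))"
    using xy(1,2) by (auto simp: cube_def)
  moreover have "comon (\<phi> \<circ> x) (\<phi> \<circ> y)"
    using comon_mono[OF xy(3) _ _ assms] xy(1,2) by (simp add: cube_def comp_def)
  ultimately show "sym_lovasz \<psi> (\<phi> \<circ> x) + sym_lovasz \<psi> (\<phi> \<circ> y)
      = sym_lovasz \<psi> (\<phi> \<circ> (\<lambda>j. min (x j) (y j))) + sym_lovasz \<psi> (\<phi> \<circ> (\<lambda>j. max (x j) (y j)))"
    by (simp add: sym_lovasz_modular)
qed

section \<open>Comonotonically modular functions are determined by their values on rays\<close>

lemma modular_apply:
  fixes f :: "('n::finite \<Rightarrow> real) \<Rightarrow> real"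
  assumes "comonotonic_modular I f" "x \<in> cube I" "y \<in> cube I" "comon x y"
  shows "f x + f y = f (\<lambda>j. min (x j) (y j)) + f (\<lambda>j. max (x j) (y j))"
  using assms unfolding comonotonic_modular_iff by blast

lemma modular_diff:
  fixes f g :: "('n::finite \<Rightarrow> real) \<Rightarrow> real"
  assumes "comonotonic_modular I f" "comonotonic_modular I g"
  shows "comonotonic_modular I (\<lambda>x. f x - g x)"
  unfolding comonotonic_modular_iff
proof (intro ballI impI)
  fix x y :: "'n \<Rightarrow> real" assume "x \<in> cube I" "y \<in> cube I" "comon x y"
  with modular_apply[OF assms(1)] modular_apply[OF assms(2)]
  show "f x - g x + (f y - g y) = f (\<lambda>j. min (x j) (y j)) - g (\<lambda>j. min (x j) (y j))
                                + (f (\<lambda>j. max (x j) (y j)) - g (\<lambda>j. max (x j) (y j)))"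
    by fastforce
qed

(* Only the values on I^n matter, and I^n is closed under min and max. *)
lemma modular_cong:
  fixes f g :: "('n::finite \<Rightarrow> real) \<Rightarrow> real"
  assumes "\<forall>x\<in>cube I. f x = g x" "comonotonic_modular I g"
  shows "comonotonic_modular I f"
  unfolding comonotonic_modular_iff
proof (intro ballI impI)
  fix x y :: "'n \<Rightarrow> real" assume xy: "x \<in> cube I" "y \<in> cube I" "comon x y"
  then have "(\<lambda>j. min (x j) (y j)) \<in> cube I" "(\<lambda>j. max (x j) (y j)) \<in> cube I"
    by (auto simp: cube_def min_def max_def)
  with xy modular_apply[OF assms(2) xy] assms(1)
  show "f x + f y = f (\<lambda>j. min (x j) (y j)) + f (\<lambda>j. max (x j) (y j))" by simp
qed

lemma modular_reflect:
  fixes h :: "('n::finite \<Rightarrow> real) \<Rightarrow> real"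
  assumes sym: "\<forall>t\<in>I. - t \<in> I" and cm: "comonotonic_modular I h"
  shows "comonotonic_modular I (\<lambda>x. h (\<lambda>j. - x j))"
  unfolding comonotonic_modular_iff
proof (intro ballI impI)
  fix x y :: "'n \<Rightarrow> real" assume xy: "x \<in> cube I" "y \<in> cube I" "comon x y"
  have "(\<lambda>j. - x j) \<in> cube I" "(\<lambda>j. - y j) \<in> cube I" using xy(1,2) sym by (auto simp: cube_def)
  moreover have "(\<lambda>j. min (- x j) (- y j)) = (\<lambda>j. - max (x j) (y j))"
    "(\<lambda>j. max (- x j) (- y j)) = (\<lambda>j. - min (x j) (y j))" by (auto simp: min_def max_def)
  ultimately show "h (\<lambda>j. - x j) + h (\<lambda>j. - y j)
      = h (\<lambda>j. - min (x j) (y j)) + h (\<lambda>j. - max (x j) (y j))"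
    using modular_apply[OF cm _ _ comon_uminus[OF xy(3)]] by simp
qed

lemma ray_in_cube: "t \<in> I \<Longrightarrow> 0 \<in> I \<Longrightarrow> (\<lambda>j. t * ind A j) \<in> cube I"
  by (auto simp: cube_def ind_def)

lemma top_level_split:
  fixes x :: "'n \<Rightarrow> real"
  assumes "0 \<le> w" "w < v" "\<forall>j. 0 \<le> x j \<and> x j \<le> v" "\<forall>j. x j \<noteq> v \<longrightarrow> x j \<le> w"
    and A_def: "A = {j. x j = v}" and u_def: "u = (\<lambda>j. min (x j) w)"
  shows "comon u (\<lambda>j. v * ind A j)"
    and "(\<lambda>j. min (u j) (v * ind A j)) = (\<lambda>j. w * ind A j)"
    and "(\<lambda>j. max (u j) (v * ind A j)) = x"
proof -
  have uA: "j \<in> A \<Longrightarrow> u j = w" and u_le: "u j \<le> w" and u_out: "j \<notin> A \<Longrightarrow> u j = x j" for j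
    using assms(2,4) by (auto simp: u_def A_def)
  show "comon u (\<lambda>j. v * ind A j)"
    unfolding comon_def
  proof (intro allI)
    fix i j
    show "0 \<le> (u i - u j) * (v * ind A i - v * ind A j)"
      using uA[of i] uA[of j] u_le[of i] u_le[of j] assms(1,2)
      by (cases "i \<in> A"; cases "j \<in> A") (auto simp: ind_def intro: mult_nonneg_nonneg mult_nonpos_nonneg)
  qed
  have "min (u j) (v * ind A j) = w * ind A j \<and> max (u j) (v * ind A j) = x j" for j
    using uA[of j] u_out[of j] assms(2,3) by (auto simp: ind_def A_def)
  then show "(\<lambda>j. min (u j) (v * ind A j)) = (\<lambda>j. w * ind A j)" "(\<lambda>j. max (u j) (v * ind A j)) = x"
    by auto
qed

(* A comonotonically modular function vanishing on all rays vanishes on nonnegative vectors: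
   by the top level split h x = h (min(x, w)), and min(x, w) takes fewer values than x. *)
lemma modular_vanishes_nonneg:
  fixes h :: "('n::finite \<Rightarrow> real) \<Rightarrow> real"
  assumes cm: "comonotonic_modular I h" and rays: "\<forall>t\<in>I. \<forall>A. h (\<lambda>j. t * ind A j) = 0"
    and I0: "0 \<in> I"
  shows "x \<in> cube I \<Longrightarrow> (\<forall>j. 0 \<le> x j) \<Longrightarrow> h x = 0"
proof (induction "card (range x)" arbitrary: x rule: less_induct)
  case less
  define v where "v = Max (range x)"
  have "v \<in> range x" unfolding v_def by (intro Max_in) auto
  then have vI: "v \<in> I" "0 \<le> v" using less.prems by (auto simp: cube_def)
  show "h x = 0"
  proof (cases "range x - {v} = {}")
    case True
    then have "x = (\<lambda>j. v * ind UNIV j)" by (auto simp: ind_def)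
    then show ?thesis using rays vI by simp
  next
    case False
    define w where "w = Max (range x - {v})"
    have w: "w \<in> range x - {v}" unfolding w_def using False by (intro Max_in) auto
    have bounds: "\<forall>j. 0 \<le> x j \<and> x j \<le> v" "\<forall>j. x j \<noteq> v \<longrightarrow> x j \<le> w"
      using less.prems(2) by (simp_all add: v_def w_def)
    have wv: "w < v" using w bounds(1) by (auto simp: less_le)
    have wI: "w \<in> I" "0 \<le> w" using w less.prems by (auto simp: cube_def)
    define u where "u = (\<lambda>j. min (x j) w)"
    define A where "A = {j. x j = v}"
    note split = top_level_split[OF wI(2) wv bounds A_def u_def]
    have u: "u \<in> cube I" "\<forall>j. 0 \<le> u j" using less.prems wI by (auto simp: cube_def u_def min_def)
    have "h u + h (\<lambda>j. v * ind A j)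
        = h (\<lambda>j. min (u j) (v * ind A j)) + h (\<lambda>j. max (u j) (v * ind A j))"
      by (rule modular_apply[OF cm u(1) ray_in_cube[OF vI(1) I0] split(1)])
    also have "\<dots> = h (\<lambda>j. w * ind A j) + h x" unfolding split(2,3) ..
    finally have "h u = h x" using rays vI(1) wI(1) by simp
    have "range u \<subseteq> range x - {v}" using bounds(2) w wv by (auto simp: u_def min_def)
    then have "card (range u) \<le> card (range x - {v})" by (intro card_mono) auto
    also have "\<dots> < card (range x)" using \<open>v \<in> range x\<close> by (intro card_Diff1_less) auto
    finally have "h u = 0" using less.hyps u by blast
    then show ?thesis using \<open>h u = h x\<close> by simp
  qed
qed

(* The nonpositive case, by reflection. *)
lemma modular_vanishes_nonpos:
  fixes h :: "('n::finite \<Rightarrow> real) \<Rightarrow> real"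
  assumes sym: "\<forall>t\<in>I. - t \<in> I" and cm: "comonotonic_modular I h"
    and rays: "\<forall>t\<in>I. \<forall>A. h (\<lambda>j. t * ind A j) = 0" and I0: "0 \<in> I"
    and x: "x \<in> cube I" "\<forall>j. x j \<le> 0"
  shows "h x = 0"
proof -
  have "h (\<lambda>j. - (t * ind A j)) = 0" if "t \<in> I" for t A
  proof -
    have "h (\<lambda>j. (- t) * ind A j) = 0" using rays sym that by blast
    then show ?thesis by simp
  qed
  then have rays': "\<forall>t\<in>I. \<forall>A. h (\<lambda>j. - (t * ind A j)) = 0" by blast
  have "(\<lambda>j. - x j) \<in> cube I" using x(1) sym by (auto simp: cube_def)
  then have "h (\<lambda>j. - (- x j)) = 0"
    using modular_vanishes_nonneg[OF modular_reflect[OF sym cm] rays' I0, of "\<lambda>j. - x j"] x(2) by simp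
  then show ?thesis by simp
qed

(* Uniqueness principle: split x into max(x, 0) and min(x, 0), which are comonotonic. *)
lemma modular_unique:
  fixes f g :: "('n::finite \<Rightarrow> real) \<Rightarrow> real"
  assumes sym: "\<forall>t\<in>I. - t \<in> I" and I0: "0 \<in> I"
    and cm: "comonotonic_modular I f" "comonotonic_modular I g"
    and rays: "\<forall>t\<in>I. \<forall>A. f (\<lambda>j. t * ind A j) = g (\<lambda>j. t * ind A j)"
  shows "\<forall>x\<in>cube I. f x = g x"
proof
  fix x :: "'n \<Rightarrow> real" assume x: "x \<in> cube I"
  define h where "h = (\<lambda>x. f x - g x)"
  have cmh: "comonotonic_modular I h" unfolding h_def by (rule modular_diff[OF cm])
  have raysh: "\<forall>t\<in>I. \<forall>A. h (\<lambda>j. t * ind A j) = 0" using rays by (simp add: h_def)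
  have zero: "(\<lambda>j. 0) = (\<lambda>j. 0 * ind {} j)" by simp
  have "h x + h (\<lambda>j. 0) = h (\<lambda>j. min (x j) 0) + h (\<lambda>j. max (x j) 0)"
    using modular_apply[OF cmh x ray_in_cube[OF I0 I0]] by (simp add: comon_def)
  moreover have "h (\<lambda>j. 0) = 0" using raysh I0 by (subst zero) blast
  moreover have "h (\<lambda>j. min (x j) 0) = 0"
    by (rule modular_vanishes_nonpos[OF sym cmh raysh I0]) (use x I0 in \<open>auto simp: cube_def min_def\<close>)
  moreover have "h (\<lambda>j. max (x j) 0) = 0"
    by (rule modular_vanishes_nonneg[OF cmh raysh I0]) (use x I0 in \<open>auto simp: cube_def max_def\<close>)
  ultimately show "f x = g x" by (simp add: h_def)
qed

lemma quasi_lovasz_ray: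
  assumes "\<phi> 0 = 0"
  shows "sym_lovasz \<psi> (\<phi> \<circ> (\<lambda>j. t * ind (A::'n::finite set) j))
         = \<psi> (ind {}) + \<phi> t * (\<psi> (ind A) - \<psi> (ind {}))"
  by (simp add: comp_ray[where \<phi>=\<phi>, OF assms] sym_lovasz_ray)

(* (i) implies (ii): the homogeneity function is phi normalized by phi(1), which is positive
   because f_0 does not vanish on some vertex. *)
lemma quasi_lovasz_imp_modular_homogeneous:
  fixes f :: "('n::finite \<Rightarrow> real) \<Rightarrow> real"
  assumes I0: "0 \<in> I" and I1: "1 \<in> I" and sq: "sym_quasi_lovasz I f" and A0: "f0 f (ind A0) \<noteq> 0"
  shows "comonotonic_modular I f \<and> oddly_homogeneous I (f0 f)"
proof -
  obtain \<psi> \<phi> where \<phi>: "mono_on I \<phi>" "odd_on I \<phi>" and f: "\<forall>x\<in>cube I. f x = sym_lovasz \<psi> (\<phi> \<circ> x)"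
    using sq unfolding sym_quasi_lovasz_def by blast
  have \<phi>0: "\<phi> 0 = 0" by (rule odd_zero[OF \<phi>(2) I0])
  have f_ray: "f (\<lambda>j. t * ind A j) = \<psi> (ind {}) + \<phi> t * (\<psi> (ind A) - \<psi> (ind {}))" if "t \<in> I" for t A
  proof -
    have "f (\<lambda>j. t * ind A j) = sym_lovasz \<psi> (\<phi> \<circ> (\<lambda>j. t * ind A j))"
      using f ray_in_cube[OF that I0] by blast
    then show ?thesis by (simp only: quasi_lovasz_ray[where \<phi>=\<phi>, OF \<phi>0])
  qed
  have "f (ind {}) = \<psi> (ind {})" using f_ray[OF I0, of "{}"] \<phi>0 by (simp add: ind_def)
  then have f0_ray: "f0 f (\<lambda>j. t * ind A j) = \<phi> t * (\<psi> (ind A) - \<psi> (ind {}))" if "t \<in> I" for t A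
    using f_ray[OF that] by (simp add: f0_def)
  have f0_vertex: "f0 f (ind A) = \<phi> 1 * (\<psi> (ind A) - \<psi> (ind {}))" for A
    using f0_ray[OF I1, of A] by simp
  have "\<phi> 1 \<noteq> 0" using A0 f0_vertex[of A0] by auto
  moreover have "0 \<le> \<phi> 1" using mono_onD[OF \<phi>(1) I0 I1] \<phi>0 by simp
  ultimately have pos: "0 < \<phi> 1" by simp
  have "oddly_homogeneous I (f0 f)"
    unfolding oddly_homogeneous_def
  proof (intro exI[of _ "\<lambda>t. \<phi> t / \<phi> 1"] conjI ballI allI)
    show "mono_on I (\<lambda>t. \<phi> t / \<phi> 1)"
      using pos mono_onD[OF \<phi>(1)] by (auto intro!: mono_onI divide_right_mono)
    show "odd_on I (\<lambda>t. \<phi> t / \<phi> 1)" using \<phi>(2) by (simp add: odd_on_def)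
    show "f0 f (\<lambda>j. t * ind A j) = \<phi> t / \<phi> 1 * f0 f (ind A)" if "t \<in> I" for t A
      using f0_ray[OF that, of A] f0_vertex[of A] pos by simp
  qed
  then show ?thesis using modular_cong[OF f sym_lovasz_comp_modular[OF \<phi>(1)]] by simp
qed

(* (ii) implies (iii): f and the symmetric Lovasz extension of its own restriction to
   {0,1}^n, composed with the homogeneity function phi, are comonotonically modular and agree
   on rays, so they coincide.  Nonconstancy forces f_0 to be nonzero at some vertex (otherwise
   f would agree with a constant on rays), and then phi(1) = 1. *)
lemma modular_homogeneous_imp_lovasz:
  fixes f :: "('n::finite \<Rightarrow> real) \<Rightarrow> real"
  assumes sym: "\<forall>t\<in>I. - t \<in> I" and I0: "0 \<in> I" and I1: "1 \<in> I"
    and nc: "nonconst_on f (cube (I \<inter> {0..})) \<or> nonconst_on f (cube (I \<inter> {..0}))"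
    and cm: "comonotonic_modular I f" and oh: "oddly_homogeneous I (f0 f)"
  shows "(\<exists>\<phi>. mono_on I \<phi> \<and> odd_on I \<phi> \<and> \<phi> 1 = 1 \<and> (\<forall>x\<in>cube I. f x = sym_lovasz f (\<phi> \<circ> x)))
         \<and> (\<exists>A. f0 f (ind A) \<noteq> 0)"
proof -
  obtain \<phi> where \<phi>: "mono_on I \<phi>" "odd_on I \<phi>"
      and hom: "\<forall>t\<in>I. \<forall>A. f0 f (\<lambda>j. t * ind A j) = \<phi> t * f0 f (ind A)"
    using oh unfolding oddly_homogeneous_def by blast
  have f_ray: "f (\<lambda>j. t * ind A j) = f (ind {}) + \<phi> t * f0 f (ind A)" if "t \<in> I" for t A
    using hom that by (simp add: f0_def algebra_simps)
  have \<phi>0: "\<phi> 0 = 0" by (rule odd_zero[OF \<phi>(2) I0])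
  have f_eq: "\<forall>x\<in>cube I. f x = sym_lovasz f (\<phi> \<circ> x)"
  proof (rule modular_unique[OF sym I0 cm sym_lovasz_comp_modular[OF \<phi>(1)]], intro ballI allI)
    fix t A assume "t \<in> I"
    show "f (\<lambda>j. t * ind A j) = sym_lovasz f (\<phi> \<circ> (\<lambda>j. t * ind A j))"
      using f_ray[OF \<open>t \<in> I\<close>, of A] by (simp only: quasi_lovasz_ray[where \<phi>=\<phi>, OF \<phi>0] f0_def)
  qed
  have "\<exists>A. f0 f (ind A) \<noteq> 0"
  proof (rule ccontr)
    assume "\<nexists>A. f0 f (ind A) \<noteq> 0"
    then have "\<forall>t\<in>I. \<forall>A. f (\<lambda>j. t * ind A j) = f (ind {})" using f_ray by simp
    then have const: "\<forall>x\<in>cube I. f x = f (ind {})"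
      by (intro modular_unique[OF sym I0 cm]) (simp_all add: comonotonic_modular_def)
    have "\<not> nonconst_on f S" if "S \<subseteq> cube I" for S
      unfolding nonconst_on_def using that const by (auto simp: subset_iff)
    moreover have "cube (I \<inter> {0..}) \<subseteq> cube I" "cube (I \<inter> {..0}) \<subseteq> cube I"
      by (auto simp: cube_def)
    ultimately show False using nc by blast
  qed
  then obtain A where A: "f0 f (ind A) \<noteq> 0" by blast
  have "f0 f (ind A) = \<phi> 1 * f0 f (ind A)" using hom I1 by force
  then have "\<phi> 1 = 1" using A by simp
  then show ?thesis using \<phi> f_eq A by blast
qed

lemma lovasz_imp_modular_homogeneous:
  fixes f :: "('n::finite \<Rightarrow> real) \<Rightarrow> real"
  assumes I0: "0 \<in> I" and \<phi>: "mono_on I \<phi>" "odd_on I \<phi>"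
    and f: "\<forall>x\<in>cube I. f x = sym_lovasz f (\<phi> \<circ> x)"
  shows "comonotonic_modular I f \<and> oddly_homogeneous I (f0 f)"
proof -
  have \<phi>0: "\<phi> 0 = 0" by (rule odd_zero[OF \<phi>(2) I0])
  have "f0 f (\<lambda>j. t * ind A j) = \<phi> t * f0 f (ind A)" if "t \<in> I" for t A
  proof -
    have "f (\<lambda>j. t * ind A j) = sym_lovasz f (\<phi> \<circ> (\<lambda>j. t * ind A j))"
      using f ray_in_cube[OF that I0] by blast
    then show ?thesis by (simp only: quasi_lovasz_ray[where \<phi>=\<phi>, OF \<phi>0] f0_def)
  qed
  then have "oddly_homogeneous I (f0 f)" using \<phi> unfolding oddly_homogeneous_def by blast
  then show ?thesis using modular_cong[OF f sym_lovasz_comp_modular[OF \<phi>(1)]] by simp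
qed

theorem theorem18:
  fixes I :: "real set" and f :: "('n::finite \<Rightarrow> real) \<Rightarrow> real"
  assumes "is_interval I" and "\<forall>x\<in>I. - x \<in> I" and "{-1..1} \<subseteq> I"
    and "nonconst_on f (cube (I \<inter> {0..})) \<or> nonconst_on f (cube (I \<inter> {..0}))"
  shows "((sym_quasi_lovasz I f \<and> (\<exists>A. f0 f (ind A) \<noteq> 0))
            \<longleftrightarrow> (comonotonic_modular I f \<and> oddly_homogeneous I (f0 f)))
       \<and> ((comonotonic_modular I f \<and> oddly_homogeneous I (f0 f))
            \<longleftrightarrow> (\<exists>\<phi>. mono_on I \<phi> \<and> odd_on I \<phi> \<and> \<phi> 1 = 1 \<and>
                    (\<forall>x\<in>cube I. f x = sym_lovasz f (\<phi> \<circ> x))))"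
proof -
  have I0: "0 \<in> I" and I1: "1 \<in> I" using assms(3) by auto
  let ?ii = "comonotonic_modular I f \<and> oddly_homogeneous I (f0 f)"
  let ?iii = "\<exists>\<phi>. mono_on I \<phi> \<and> odd_on I \<phi> \<and> \<phi> 1 = 1 \<and> (\<forall>x\<in>cube I. f x = sym_lovasz f (\<phi> \<circ> x))"
  have ii_iii: "?iii \<and> (\<exists>A. f0 f (ind A) \<noteq> 0)" if "?ii"
    using modular_homogeneous_imp_lovasz[OF assms(2) I0 I1 assms(4)] that by blast
  have iii_ii: "?ii" if "?iii"
    using that lovasz_imp_modular_homogeneous[OF I0] by blast
  have iii_i: "sym_quasi_lovasz I f" if "?iii"
    using that unfolding sym_quasi_lovasz_def by blast
  have i_ii: "?ii" if "sym_quasi_lovasz I f" "\<exists>A. f0 f (ind A) \<noteq> 0"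
    using that quasi_lovasz_imp_modular_homogeneous[OF I0 I1] by blast
  show ?thesis using ii_iii iii_ii iii_i i_ii by blast
qed

end
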